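(* Let $X=(x_1,\ldots,x_N)$ with $x_n\in\mathbb{R}^D$, let $K\in\mathbb{N}$, and let $p_{nk}\in[0,1]$ ($n=1,\ldots,N$, $k=1,\ldots,K$) with $\sum_{k=1}^K p_{nk}=1$ for every $n$. Let $z_1,\ldots,z_N$ be independent random vectors, where $z_n=(z_{n1},\ldots,z_{nK})\in\{0,1\}^K$ has exactly one entry equal to $1$ and $\Pr(z_{nk}=1)=p_{nk}$. Define $r_k=\sum_{n=1}^N p_{nk}$, $w_k^{EM}=\frac{r_k}{N}$ and $w_k^{SEM}=\frac{1}{N}\sum_{n=1}^N z_{nk}$. Fix $k\in\{1,\ldots,K\}$ with $r_k>0$ and let $2e^{-r_k/3}\leq\delta\leq 1$. Then for $\lambda_w=\sqrt{\frac{3\ln(2/\delta)}{r_k}}$, with probability at least $1-\delta$, \[\left|w_k^{SEM}-w_k^{EM}\right|\leq\lambda_w\, w_k^{EM}.\]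
   Context: This describes one update step of the EM and the stochastic EM (SEM) algorithm for a Gaussian mixture: $p_{nk}=p(z_{nk}=1\mid X,\theta)$ is the posterior probability (responsibility) that component $k$ generated $x_n$ under the current parameters $\theta$; EM sets the new weight to $w_k^{EM}$, while SEM samples the assignment $z$ from these posteriors independently for each $n$ and sets the new weight to $w_k^{SEM}$. *)

theory Defs
  imports "HOL-Probability.Probability"
begin

(* r_k = sum_n p_nk ; indices n in {0..<N}, k in {0..<K} (0-based) *)
definition resp_mass :: "nat \<Rightarrow> (nat \<Rightarrow> nat \<Rightarrow> real) \<Rightarrow> nat \<Rightarrow> real" where
  "resp_mass N p k = (\<Sum>n<N. p n k)"

definition w_EM :: "nat \<Rightarrow> (nat \<Rightarrow> nat \<Rightarrow> real) \<Rightarrow> nat \<Rightarrow> real" where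
  "w_EM N p k = resp_mass N p k / real N"

definition w_SEM :: "nat \<Rightarrow> (nat \<Rightarrow> nat \<Rightarrow> 'a \<Rightarrow> real) \<Rightarrow> nat \<Rightarrow> 'a \<Rightarrow> real" where
  "w_SEM N z k \<omega> = (\<Sum>n<N. z n k \<omega>) / real N"

end

theory Submission
  imports Defs
begin

text \<open>
  Under SEM, N w_k^SEM is a sum of independent Bernoulli variables with success probabilities
  p_nk and mean r_k = N w_k^EM, so the claim is a multiplicative Chernoff bound. Each summand
  has moment generating function 1 + p (e^t - 1) \<le> exp (p (e^t - 1)); Markov's inequality for
  exp (t S) with t = ln (1 + \<epsilon>), resp. t = -\<epsilon>, bounds each tail by exp (-\<epsilon>^2 r_k / 3).
  For \<epsilon> = \<lambda>_w both tails are \<delta>/2, and \<delta> \<ge> 2 exp (-r_k / 3) says exactly that \<lambda>_w \<le> 1.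
\<close>

lemma ln_one_plus_ge_Pade:
  fixes x :: real
  assumes "0 \<le> x"
  shows "2 * x / (2 + x) \<le> ln (1 + x)"
proof -
  let ?g = "\<lambda>x. ln (1 + x) - 2 * x / (2 + x)"
  have "?g 0 \<le> ?g x"
  proof (rule DERIV_nonneg_imp_nondecreasing[OF assms])
    fix y :: real
    assume y: "0 \<le> y" "y \<le> x"
    have "(?g has_real_derivative 1 / (1 + y) - 4 / (2 + y)\<^sup>2) (at y)"
      using y by (auto intro!: derivative_eq_intros simp: power2_eq_square field_simps)
    moreover have "1 / (1 + y) - 4 / (2 + y)\<^sup>2 = y\<^sup>2 / ((1 + y) * (2 + y)\<^sup>2)"
    proof -
      have "1 + y > 0" "2 + y > 0"
        using y by auto
      then show ?thesis
        by (simp add: divide_simps) algebra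
    qed
    moreover have "0 \<le> y\<^sup>2 / ((1 + y) * (2 + y)\<^sup>2)"
      using y by simp
    ultimately show "\<exists>d. (?g has_real_derivative d) (at y) \<and> 0 \<le> d"
      by metis
  qed
  then show ?thesis
    by simp
qed

lemma exp_minus_le_Taylor2:
  fixes x :: real
  assumes "0 \<le> x"
  shows "exp (- x) \<le> 1 - x + x\<^sup>2 / 2"
proof -
  let ?g = "\<lambda>x. 1 - x + x\<^sup>2 / 2 - exp (- x)"
  have "?g 0 \<le> ?g x"
  proof (rule DERIV_nonneg_imp_nondecreasing[OF assms])
    fix y :: real
    have "(?g has_real_derivative y - 1 + exp (- y)) (at y)"
      by (auto intro!: derivative_eq_intros simp: power2_eq_square)
    moreover have "0 \<le> y - 1 + exp (- y)"
      using exp_ge_add_one_self[of "- y"] by simp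
    ultimately show "\<exists>d. (?g has_real_derivative d) (at y) \<and> 0 \<le> d"
      by blast
  qed
  then show ?thesis
    by simp
qed

locale indep_bernoulli_vars = prob_space +
  fixes I :: "'i set" and Y :: "'i \<Rightarrow> 'a \<Rightarrow> real"
  assumes finite_index: "finite I"
    and indep: "indep_vars (\<lambda>_. borel) Y I"
    and zero_one: "\<And>i \<omega>. i \<in> I \<Longrightarrow> \<omega> \<in> space M \<Longrightarrow> Y i \<omega> \<in> {0, 1}"
begin

definition total :: "'a \<Rightarrow> real" where
  "total \<omega> = (\<Sum>i\<in>I. Y i \<omega>)"

definition mean :: real where
  "mean = (\<Sum>i\<in>I. expectation (Y i))"

lemma random_variable [measurable]: "i \<in> I \<Longrightarrow> random_variable borel (Y i)"
  using indep by (auto simp: indep_vars_def)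

lemma random_variable_total [measurable]: "random_variable borel total"
  unfolding total_def by measurable

lemma integrable_var: "i \<in> I \<Longrightarrow> integrable M (Y i)"
  by (rule integrable_const_bound[where B = 1]) (auto intro!: AE_I2 dest: zero_one)

lemma expectation_var_eq_prob:
  assumes "i \<in> I"
  shows "expectation (Y i) = prob {\<omega> \<in> space M. Y i \<omega> = 1}"
proof -
  have "expectation (Y i) = expectation (indicator {\<omega> \<in> space M. Y i \<omega> = 1})"
    by (rule Bochner_Integration.integral_cong) (auto simp: indicator_def dest: zero_one[OF assms])
  also have "\<dots> = prob {\<omega> \<in> space M. Y i \<omega> = 1}"
    using assms by simp
  finally show ?thesis .
qed

lemma expectation_var_bounds: "i \<in> I \<Longrightarrow> 0 \<le> expectation (Y i) \<and> expectation (Y i) \<le> 1"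
  by (simp add: expectation_var_eq_prob)

lemma mean_nonneg: "0 \<le> mean"
  unfolding mean_def by (intro sum_nonneg) (simp add: expectation_var_bounds)

lemma expectation_exp_var:
  assumes "i \<in> I"
  shows "expectation (\<lambda>\<omega>. exp (t * Y i \<omega>)) = 1 + expectation (Y i) * (exp t - 1)"
proof -
  have "expectation (\<lambda>\<omega>. exp (t * Y i \<omega>)) = expectation (\<lambda>\<omega>. 1 + (exp t - 1) * Y i \<omega>)"
    by (rule Bochner_Integration.integral_cong) (auto dest: zero_one[OF assms])
  also have "\<dots> = 1 + (exp t - 1) * expectation (Y i)"
    using integrable_var[OF assms] by (simp add: prob_space)
  finally show ?thesis
    by simp
qed

lemma exp_scaled_total: "exp (t * total \<omega>) = (\<Prod>i\<in>I. exp (t * Y i \<omega>))"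
  by (simp add: total_def sum_distrib_left exp_sum finite_index)

lemma indep_exp_vars: "indep_vars (\<lambda>_. borel) (\<lambda>i \<omega>. exp (t * Y i \<omega>)) I"
  by (rule indep_vars_compose2[OF indep]) simp

lemma integrable_exp_var: "i \<in> I \<Longrightarrow> integrable M (\<lambda>\<omega>. exp (t * Y i \<omega>))"
  by (rule integrable_const_bound[where B = "exp \<bar>t\<bar>"]) (auto intro!: AE_I2 dest: zero_one)

lemma integrable_exp_total: "integrable M (\<lambda>\<omega>. exp (t * total \<omega>))"
  unfolding exp_scaled_total
  by (rule indep_vars_integrable[OF finite_index indep_exp_vars integrable_exp_var])

lemma expectation_exp_total_le: "expectation (\<lambda>\<omega>. exp (t * total \<omega>)) \<le> exp (mean * (exp t - 1))"
proof -
  have "expectation (\<lambda>\<omega>. exp (t * total \<omega>)) = (\<Prod>i\<in>I. expectation (\<lambda>\<omega>. exp (t * Y i \<omega>)))"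
    unfolding exp_scaled_total
    by (rule indep_vars_lebesgue_integral[OF finite_index indep_exp_vars integrable_exp_var])
  also have "\<dots> = (\<Prod>i\<in>I. 1 + expectation (Y i) * (exp t - 1))"
    by (simp add: expectation_exp_var)
  also have "\<dots> \<le> (\<Prod>i\<in>I. exp (expectation (Y i) * (exp t - 1)))"
  proof (rule prod_mono)
    fix i
    assume "i \<in> I"
    then have "0 \<le> expectation (Y i) * exp t" "expectation (Y i) \<le> 1"
      by (simp_all add: expectation_var_bounds)
    then have "- 1 \<le> expectation (Y i) * (exp t - 1)"
      by (simp add: right_diff_distrib)
    then show "0 \<le> 1 + expectation (Y i) * (exp t - 1) \<and>
        1 + expectation (Y i) * (exp t - 1) \<le> exp (expectation (Y i) * (exp t - 1))"
      using exp_ge_add_one_self[of "expectation (Y i) * (exp t - 1)"] by linarith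
  qed
  also have "\<dots> = exp (mean * (exp t - 1))"
    by (simp add: mean_def exp_sum finite_index sum_distrib_right)
  finally show ?thesis .
qed

lemma Chernoff_bound:
  "prob {\<omega> \<in> space M. c \<le> t * total \<omega>} \<le> exp (mean * (exp t - 1) - c)"
proof -
  have "prob {\<omega> \<in> space M. c \<le> t * total \<omega>} = prob {\<omega> \<in> space M. exp c \<le> exp (t * total \<omega>)}"
    by simp
  also have "\<dots> \<le> expectation (\<lambda>\<omega>. exp (t * total \<omega>)) / exp c"
    by (rule integral_Markov_inequality_measure[where A = "space M"])
       (auto simp: integrable_exp_total)
  also have "\<dots> \<le> exp (mean * (exp t - 1)) / exp c"
    using expectation_exp_total_le by (simp add: divide_right_mono)
  finally show ?thesis
    by (simp add: exp_diff)
qed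

lemma prob_total_upper_tail:
  assumes "0 < \<epsilon>" "\<epsilon> \<le> 1"
  shows "prob {\<omega> \<in> space M. (1 + \<epsilon>) * mean \<le> total \<omega>} \<le> exp (- \<epsilon>\<^sup>2 * mean / 3)"
proof -
  define t where "t = ln (1 + \<epsilon>)"
  have "t > 0" and exp_t: "exp t = 1 + \<epsilon>"
    using assms by (simp_all add: t_def)
  then have "{\<omega> \<in> space M. (1 + \<epsilon>) * mean \<le> total \<omega>} =
      {\<omega> \<in> space M. t * ((1 + \<epsilon>) * mean) \<le> t * total \<omega>}"
    by auto
  then have "prob {\<omega> \<in> space M. (1 + \<epsilon>) * mean \<le> total \<omega>} \<le>
      exp (mean * (exp t - 1) - t * ((1 + \<epsilon>) * mean))"
    by (simp only: Chernoff_bound)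
  also have "\<dots> \<le> exp (- \<epsilon>\<^sup>2 * mean / 3)"
  proof -
    have "\<epsilon> - t * (1 + \<epsilon>) \<le> \<epsilon> - 2 * \<epsilon> / (2 + \<epsilon>) * (1 + \<epsilon>)"
      using mult_right_mono[OF ln_one_plus_ge_Pade, of \<epsilon> "1 + \<epsilon>"] assms by (simp add: t_def)
    also have "\<dots> = - \<epsilon>\<^sup>2 / (2 + \<epsilon>)"
      using assms by (simp add: field_simps power2_eq_square)
    also have "\<dots> \<le> - \<epsilon>\<^sup>2 / 3"
      using divide_left_mono[of "2 + \<epsilon>" 3 "\<epsilon>\<^sup>2"] assms by simp
    finally have "mean * (\<epsilon> - t * (1 + \<epsilon>)) \<le> mean * (- \<epsilon>\<^sup>2 / 3)"
      using mean_nonneg by (rule mult_left_mono)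
    then show ?thesis
      by (simp add: exp_t algebra_simps)
  qed
  finally show ?thesis .
qed

lemma prob_total_lower_tail:
  assumes "0 < \<epsilon>"
  shows "prob {\<omega> \<in> space M. total \<omega> \<le> (1 - \<epsilon>) * mean} \<le> exp (- \<epsilon>\<^sup>2 * mean / 2)"
proof -
  have "{\<omega> \<in> space M. total \<omega> \<le> (1 - \<epsilon>) * mean} =
      {\<omega> \<in> space M. - \<epsilon> * ((1 - \<epsilon>) * mean) \<le> - \<epsilon> * total \<omega>}"
    using assms by auto
  then have "prob {\<omega> \<in> space M. total \<omega> \<le> (1 - \<epsilon>) * mean} \<le>
      exp (mean * (exp (- \<epsilon>) - 1) - - \<epsilon> * ((1 - \<epsilon>) * mean))"
    by (simp only: Chernoff_bound)
  also have "\<dots> \<le> exp (- \<epsilon>\<^sup>2 * mean / 2)"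
  proof -
    have "\<epsilon> * (1 - \<epsilon>) = \<epsilon> - \<epsilon>\<^sup>2"
      by (simp add: power2_eq_square algebra_simps)
    then have "exp (- \<epsilon>) - 1 + \<epsilon> * (1 - \<epsilon>) \<le> - \<epsilon>\<^sup>2 / 2"
      using exp_minus_le_Taylor2[of \<epsilon>] assms by simp
    then have "mean * (exp (- \<epsilon>) - 1 + \<epsilon> * (1 - \<epsilon>)) \<le> mean * (- \<epsilon>\<^sup>2 / 2)"
      using mean_nonneg by (rule mult_left_mono)
    then show ?thesis
      by (simp add: algebra_simps)
  qed
  finally show ?thesis .
qed

lemma prob_total_concentration:
  assumes "0 < \<epsilon>" "\<epsilon> \<le> 1"
  shows "prob {\<omega> \<in> space M. \<bar>total \<omega> - mean\<bar> \<le> \<epsilon> * mean} \<ge> 1 - 2 * exp (- \<epsilon>\<^sup>2 * mean / 3)"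
proof -
  let ?A = "{\<omega> \<in> space M. (1 + \<epsilon>) * mean \<le> total \<omega>}"
  let ?B = "{\<omega> \<in> space M. total \<omega> \<le> (1 - \<epsilon>) * mean}"
  let ?G = "{\<omega> \<in> space M. \<bar>total \<omega> - mean\<bar> \<le> \<epsilon> * mean}"
  have "exp (- \<epsilon>\<^sup>2 * mean / 2) \<le> exp (- \<epsilon>\<^sup>2 * mean / 3)"
    using mean_nonneg by (simp add: frac_le)
  then have "prob ?A + prob ?B \<le> 2 * exp (- \<epsilon>\<^sup>2 * mean / 3)"
    using prob_total_upper_tail[OF assms] prob_total_lower_tail[OF assms(1)] by linarith
  moreover have "prob (space M - ?G) \<le> prob ?A + prob ?B"
    by (rule order_trans[OF finite_measure_mono measure_Un_le]) (auto simp: algebra_simps)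
  moreover have "prob (space M - ?G) = 1 - prob ?G"
    by (rule prob_compl) measurable
  ultimately show ?thesis
    by simp
qed

lemma prob_total_concentration_confidence:
  assumes "0 < mean" and \<delta>: "2 * exp (- mean / 3) \<le> \<delta>" "\<delta> \<le> 1"
  shows "prob {\<omega> \<in> space M. \<bar>total \<omega> - mean\<bar> \<le> sqrt (3 * ln (2 / \<delta>) / mean) * mean} \<ge> 1 - \<delta>"
proof -
  define \<epsilon> where "\<epsilon> = sqrt (3 * ln (2 / \<delta>) / mean)"
  have "0 < \<delta>"
    using \<delta>(1) by (smt (verit) exp_gt_zero)
  then have "0 < ln (2 / \<delta>)"
    using \<delta>(2) by simp
  then have "0 < \<epsilon>" and \<epsilon>_sq: "\<epsilon>\<^sup>2 * mean / 3 = ln (2 / \<delta>)"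
    using \<open>0 < mean\<close> by (simp_all add: \<epsilon>_def)
  have "2 / \<delta> \<le> exp (mean / 3)"
    using \<delta>(1) \<open>0 < \<delta>\<close> by (simp add: exp_minus field_simps)
  then have "ln (2 / \<delta>) \<le> mean / 3"
    using \<open>0 < \<delta>\<close> by (metis divide_pos_pos ln_exp ln_le_cancel_iff exp_gt_zero zero_less_numeral)
  then have "\<epsilon>\<^sup>2 * mean \<le> 1 * mean"
    using \<epsilon>_sq by simp
  then have "\<epsilon>\<^sup>2 \<le> 1\<^sup>2"
    using \<open>0 < mean\<close> by simp
  then have "\<epsilon> \<le> 1"
    by (rule power2_le_imp_le) simp
  have "2 * exp (- \<epsilon>\<^sup>2 * mean / 3) = \<delta>"
    using \<epsilon>_sq \<open>0 < \<delta>\<close> by (simp add: exp_minus)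
  then show ?thesis
    using prob_total_concentration[OF \<open>0 < \<epsilon>\<close> \<open>\<epsilon> \<le> 1\<close>] by (simp add: \<epsilon>_def)
qed

end

theorem theorem1:
  fixes M :: "'a measure" and N K k :: nat and p :: "nat \<Rightarrow> nat \<Rightarrow> real"
    and z :: "nat \<Rightarrow> nat \<Rightarrow> 'a \<Rightarrow> real" and \<delta> :: real
  assumes "prob_space M"
    and p_range: "\<forall>n<N. \<forall>j<K. 0 \<le> p n j \<and> p n j \<le> 1"
    and p_sum: "\<forall>n<N. (\<Sum>j<K. p n j) = 1"
    and onehot: "\<forall>n<N. \<forall>\<omega>\<in>space M. (\<forall>j<K. z n j \<omega> \<in> {0, 1}) \<and> card {j. j < K \<and> z n j \<omega> = 1} = 1"
    and indep: "prob_space.indep_vars M (\<lambda>_. count_space UNIV)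
                  (\<lambda>n \<omega>. restrict (\<lambda>j. z n j \<omega>) {..<K}) {..<N}"
    and distr: "\<forall>n<N. \<forall>j<K. measure M {\<omega> \<in> space M. z n j \<omega> = 1} = p n j"
    and k: "k < K"
    and r_pos: "resp_mass N p k > 0"
    and \<delta>: "2 * exp (- resp_mass N p k / 3) \<le> \<delta>" "\<delta> \<le> 1"
  shows "measure M {\<omega> \<in> space M.
            \<bar>w_SEM N z k \<omega> - w_EM N p k\<bar>
              \<le> sqrt (3 * ln (2 / \<delta>) / resp_mass N p k) * w_EM N p k} \<ge> 1 - \<delta>"
proof -
  interpret prob_space M by fact
  interpret Y: indep_bernoulli_vars M "{..<N}" "\<lambda>n. z n k"
  proof
    show "indep_vars (\<lambda>_. borel) (\<lambda>n. z n k) {..<N}"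
      using indep_vars_compose2[OF indep, of "\<lambda>_ f. f k" "\<lambda>_. borel"] k by simp
  qed (use onehot k in auto)
  have mean: "Y.mean = resp_mass N p k"
    using distr k by (simp add: Y.mean_def Y.expectation_var_eq_prob resp_mass_def)
  have "N > 0"
    using r_pos by (cases N) (auto simp: resp_mass_def)
  then have "{\<omega> \<in> space M. \<bar>w_SEM N z k \<omega> - w_EM N p k\<bar>
                \<le> sqrt (3 * ln (2 / \<delta>) / resp_mass N p k) * w_EM N p k} =
             {\<omega> \<in> space M. \<bar>Y.total \<omega> - Y.mean\<bar>
                \<le> sqrt (3 * ln (2 / \<delta>) / Y.mean) * Y.mean}"
    by (simp add: mean w_SEM_def w_EM_def Y.total_def abs_divide divide_le_cancel
        flip: diff_divide_distrib)
  then show ?thesis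
    using Y.prob_total_concentration_confidence r_pos \<delta> by (simp add: mean)
qed

end
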